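(* Let $V^1$ and $V^2$ be vertex algebras and $f:V^1\to V^2$ a homomorphism of vertex algebras. If $M$ is an $MZ_{0,-1}$-subspace of $V^2$, then $f^{-1}(M)$ is an $MZ_{0,-1}$-subspace of $V^1$.
   Context: Vertex algebras are over $\mathbb{C}$; for $u\in V$ write $Y(u,z)=\sum_{n\in\mathbb{Z}}u_nz^{-n-1}$ with $u_n\in\operatorname{End}V$. A homomorphism $f:V^1\to V^2$ is a linear map with $f(u_nv)=f(u)_nf(v)$ for all $u,v\in V^1$, $n\in\mathbb{Z}$, and $f(\mathbf{1})=\mathbf{1}$. Iterated products are nested to the right: $v_{n_1}\cdots v_{n_t}v=v_{n_1}(\cdots(v_{n_t}v))$. For a subspace $M\subseteq V$: $r_{0,-1}(M)$ is the set of $v\in V$ for which there is $m\ge 0$ with $v_{n_1}\cdots v_{n_t}v\in M$ for all $t\ge m$ and all $n_1,\dots,n_t\in\{0,-1\}$. $lsr_{0,-1}(M)$ is the set of $v\in V$ such that for every $b\in V$ there is $m\ge0$ with $b_sv_{n_1}\cdots v_{n_t}v\in M$ for all $t\ge m$ and all $s,n_1,\dots,n_t\in\{0,-1\}$. $rsr_{0,-1}(M)$ is the set of $v\in V$ such that for every $w\in V$ there is $m\ge 0$ with $(v_{n_1}\cdots v_{n_t}v)_nw\in M$ for all $t\ge m$ and all $n,n_1,\dots,n_t\in\{0,-1\}$. $sr_{0,-1}(M)=lsr_{0,-1}(M)\cap rsr_{0,-1}(M)$. $M$ is an $MZ_{0,-1}$-subspace of $V$ if $r_{0,-1}(M)=sr_{0,-1}(M)$.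 *)

theory Defs
  imports Complex_Main
begin

text \<open>A vertex algebra over the complex numbers, with underlying vector space the
whole type 'a.  scl is the scalar multiplication, prd u n v is u_n v
(the n-th mode of Y(u,z) applied to v), vac is the vacuum vector.\<close>

record 'a va_struct =
  scl :: "complex \<Rightarrow> 'a \<Rightarrow> 'a"
  prd :: "'a \<Rightarrow> int \<Rightarrow> 'a \<Rightarrow> 'a"
  vac :: "'a"

definition fsum :: "(nat \<Rightarrow> 'a::comm_monoid_add) \<Rightarrow> 'a" where
  "fsum f = sum f {i. f i \<noteq> 0}"

definition vertex_algebra :: "('a::ab_group_add) va_struct \<Rightarrow> bool" where
  "vertex_algebra V \<longleftrightarrow>
     Vector_Spaces.vector_space (scl V)
   \<and> (\<forall>u n. Vector_Spaces.linear (scl V) (scl V) (prd V u n))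
   \<and> (\<forall>n v. Vector_Spaces.linear (scl V) (scl V) (\<lambda>u. prd V u n v))
   \<and> (\<forall>u v. \<exists>N. \<forall>n\<ge>N. prd V u n v = 0)
   \<and> (\<forall>n v. prd V (vac V) n v = (if n = -1 then v else 0))
   \<and> (\<forall>u. prd V u (-1) (vac V) = u)
   \<and> (\<forall>u n. n \<ge> 0 \<longrightarrow> prd V u n (vac V) = 0)
   \<and> (\<forall>u v w p q r.
        fsum (\<lambda>i. scl V ((of_int p :: complex) gchoose i)
                     (prd V (prd V u (r + int i) v) (p + q - int i) w))
      = fsum (\<lambda>i. scl V ((-1) ^ i * ((of_int r :: complex) gchoose i))
                     (prd V u (p + r - int i) (prd V v (q + int i) w)
                      - scl V ((-1) powi r) (prd V v (q + r - int i) (prd V u (p + int i) w)))))"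

definition va_hom :: "('a::ab_group_add) va_struct \<Rightarrow> ('b::ab_group_add) va_struct \<Rightarrow> ('a \<Rightarrow> 'b) \<Rightarrow> bool" where
  "va_hom V1 V2 f \<longleftrightarrow>
     Vector_Spaces.linear (scl V1) (scl V2) f
   \<and> (\<forall>u v n. f (prd V1 u n v) = prd V2 (f u) n (f v))
   \<and> f (vac V1) = vac V2"

text \<open>Right-nested iterated product v_{n1} ... v_{nt} v for ns = [n1,...,nt].\<close>
definition iter_prod :: "'a va_struct \<Rightarrow> 'a \<Rightarrow> int list \<Rightarrow> 'a" where
  "iter_prod V v ns = foldr (\<lambda>n x. prd V v n x) ns v"

definition r01 :: "'a va_struct \<Rightarrow> 'a set \<Rightarrow> 'a set" where
  "r01 V M = {v. \<exists>m::nat. \<forall>ns. length ns \<ge> m \<and> set ns \<subseteq> {0, -1} \<longrightarrow> iter_prod V v ns \<in> M}"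

definition lsr01 :: "'a va_struct \<Rightarrow> 'a set \<Rightarrow> 'a set" where
  "lsr01 V M = {v. \<forall>b. \<exists>m::nat. \<forall>s ns. s \<in> {0, -1} \<and> length ns \<ge> m \<and> set ns \<subseteq> {0, -1}
                 \<longrightarrow> prd V b s (iter_prod V v ns) \<in> M}"

definition rsr01 :: "'a va_struct \<Rightarrow> 'a set \<Rightarrow> 'a set" where
  "rsr01 V M = {v. \<forall>w. \<exists>m::nat. \<forall>n ns. n \<in> {0, -1} \<and> length ns \<ge> m \<and> set ns \<subseteq> {0, -1}
                 \<longrightarrow> prd V (iter_prod V v ns) n w \<in> M}"

definition sr01 :: "'a va_struct \<Rightarrow> 'a set \<Rightarrow> 'a set" where
  "sr01 V M = lsr01 V M \<inter> rsr01 V M"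

definition MZ01_subspace :: "('a::ab_group_add) va_struct \<Rightarrow> 'a set \<Rightarrow> bool" where
  "MZ01_subspace V M \<longleftrightarrow> module.subspace (scl V) M \<and> r01 V M = sr01 V M"

end

theory Submission
  imports Defs
begin

text \<open>A homomorphism commutes with iterated products, so taking preimages commutes with
  r01 and maps the strong radicals of M into those of the preimage.\<close>

lemma va_hom_prd:
  assumes "va_hom V1 V2 f"
  shows "f (prd V1 u n v) = prd V2 (f u) n (f v)"
  using assms by (simp add: va_hom_def)

lemma va_hom_iter_prod:
  assumes "va_hom V1 V2 f"
  shows "f (iter_prod V1 v ns) = iter_prod V2 (f v) ns"
  using assms by (induction ns) (simp_all add: iter_prod_def va_hom_prd)

lemma r01_vimage:
  assumes "va_hom V1 V2 f"
  shows "r01 V1 (f -` M) = f -` r01 V2 M"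
  by (simp add: r01_def va_hom_iter_prod[OF assms])

lemma lsr01_vimage:
  assumes "va_hom V1 V2 f"
  shows "f -` lsr01 V2 M \<subseteq> lsr01 V1 (f -` M)"
proof
  fix v assume "v \<in> f -` lsr01 V2 M"
  then have "\<forall>b. \<exists>m::nat. \<forall>s ns. s \<in> {0, -1} \<and> length ns \<ge> m \<and> set ns \<subseteq> {0, -1}
                 \<longrightarrow> prd V2 (f b) s (iter_prod V2 (f v) ns) \<in> M"
    by (simp add: lsr01_def)
  then show "v \<in> lsr01 V1 (f -` M)"
    by (simp add: lsr01_def va_hom_prd[OF assms] va_hom_iter_prod[OF assms])
qed

lemma rsr01_vimage:
  assumes "va_hom V1 V2 f"
  shows "f -` rsr01 V2 M \<subseteq> rsr01 V1 (f -` M)"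
proof
  fix v assume "v \<in> f -` rsr01 V2 M"
  then have "\<forall>w. \<exists>m::nat. \<forall>n ns. n \<in> {0, -1} \<and> length ns \<ge> m \<and> set ns \<subseteq> {0, -1}
                 \<longrightarrow> prd V2 (iter_prod V2 (f v) ns) n (f w) \<in> M"
    by (simp add: rsr01_def)
  then show "v \<in> rsr01 V1 (f -` M)"
    by (simp add: rsr01_def va_hom_prd[OF assms] va_hom_iter_prod[OF assms])
qed

lemma sr01_vimage:
  assumes "va_hom V1 V2 f"
  shows "f -` sr01 V2 M \<subseteq> sr01 V1 (f -` M)"
  using lsr01_vimage[OF assms, of M] rsr01_vimage[OF assms, of M]
  by (auto simp: sr01_def)

lemma vertex_algebra_vac_minus_one:
  assumes "vertex_algebra V"
  shows "prd V (vac V) (-1) x = x"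
  using assms by (simp add: vertex_algebra_def)

lemma lsr01_subset_r01:
  assumes "vertex_algebra V"
  shows "lsr01 V M \<subseteq> r01 V M"
proof
  fix v assume "v \<in> lsr01 V M"
  then obtain m :: nat where "\<forall>s ns. s \<in> {0, -1} \<and> length ns \<ge> m \<and> set ns \<subseteq> {0, -1}
                 \<longrightarrow> prd V (vac V) s (iter_prod V v ns) \<in> M"
    unfolding lsr01_def by blast
  then have "\<forall>ns. length ns \<ge> m \<and> set ns \<subseteq> {0, -1}
      \<longrightarrow> prd V (vac V) (-1) (iter_prod V v ns) \<in> M"
    by simp
  then have "\<forall>ns. length ns \<ge> m \<and> set ns \<subseteq> {0, -1} \<longrightarrow> iter_prod V v ns \<in> M"
    by (simp only: vertex_algebra_vac_minus_one[OF assms])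
  then show "v \<in> r01 V M"
    unfolding r01_def by blast
qed

lemma sr01_subset_r01:
  assumes "vertex_algebra V"
  shows "sr01 V M \<subseteq> r01 V M"
  using lsr01_subset_r01[OF assms] by (auto simp: sr01_def)

lemma va_hom_subspace_vimage:
  assumes "va_hom V1 V2 f" and "module.subspace (scl V2) M"
  shows "module.subspace (scl V1) (f -` M)"
proof -
  have "module_hom (scl V1) (scl V2) f"
    using assms(1) by (simp add: va_hom_def Vector_Spaces.linear_def)
  then show ?thesis
    using module_hom.subspace_vimage assms(2) by blast
qed

theorem mainTheorem6:
  fixes V1 :: "('a::ab_group_add) va_struct" and V2 :: "('b::ab_group_add) va_struct"
    and f :: "'a \<Rightarrow> 'b" and M :: "'b set"
  assumes "vertex_algebra V1" and "vertex_algebra V2" and "va_hom V1 V2 f"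
    and "MZ01_subspace V2 M"
  shows "MZ01_subspace V1 (f -` M)"
proof -
  have subspace: "module.subspace (scl V2) M" and radicals: "r01 V2 M = sr01 V2 M"
    using assms(4) by (simp_all add: MZ01_subspace_def)
  have "r01 V1 (f -` M) = f -` sr01 V2 M"
    using r01_vimage[OF assms(3)] radicals by simp
  also have "\<dots> \<subseteq> sr01 V1 (f -` M)"
    by (rule sr01_vimage[OF assms(3)])
  finally have "r01 V1 (f -` M) = sr01 V1 (f -` M)"
    using sr01_subset_r01[OF assms(1)] by blast
  then show ?thesis
    using va_hom_subspace_vimage[OF assms(3) subspace] by (simp add: MZ01_subspace_def)
qed

end
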